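(* Let $k>0$ be an integer (in canonical form) and let $G\cong\{a\mid b\}$ where $a$, $b$, $G$ are numbers. If $b-G\le 1$ and, for $i=1,\dots,k$, $\alpha_i>0$ is the least integer such that $2^{-\alpha_i}<b-G-\sum_{j=1}^{i-1}2^{-\alpha_j}$, then \[G\mathbin{:}k=G+\sum_{i=1}^k\frac{1}{2^{\alpha_i}}.\] Similarly, if $G-a\le 1$ and, for $i=1,\dots,k$, $\beta_i$ is the least integer such that $2^{-\beta_i}<G-a-\sum_{j=1}^{i-1}2^{-\beta_j}$, then \[G\mathbin{:}(-k)=G-\sum_{i=1}^k\frac{1}{2^{\beta_i}}.\]
   Context: Games are short normal-play combinatorial games, written $\{L\mid R\}$; a number is a game with $G^L<G<G^R$ for all options, with values identified with dyadic rationals. Canonical integers: $n\cong\{n-1\mid\}$ for $n>0$, $n\cong\{\mid n+1\}$ for $n<0$, $0\cong\{\mid\}$. The ordinal sum is $G\mathbin{:}H\cong\{L(G),\,G\mathbin{:}L(H)\mid R(G),\,G\mathbin{:}R(H)\}$. *)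

theory Defs
  imports Complex_Main
begin

datatype game = Game "game list" "game list"

lemma size_mem_list_less: "x \<in> set xs \<Longrightarrow> size x \<le> size_list size xs"
  by (induction xs) auto

function game_le :: "game \<Rightarrow> game \<Rightarrow> bool" where
  "game_le (Game GL GR) (Game HL HR) \<longleftrightarrow>
     (\<forall>x\<in>set GL. \<not> game_le (Game HL HR) x) \<and> (\<forall>y\<in>set HR. \<not> game_le y (Game GL GR))"
  by pat_completeness auto
termination
  by (relation "measure (\<lambda>(g,h). size g + size h)")
     (auto dest: size_mem_list_less)

definition game_lt :: "game \<Rightarrow> game \<Rightarrow> bool" where
  "game_lt G H \<longleftrightarrow> game_le G H \<and> \<not> game_le H G"

definition game_eq :: "game \<Rightarrow> game \<Rightarrow> bool" where
  "game_eq G H \<longleftrightarrow> game_le G H \<and> game_le H G"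

fun is_number :: "game \<Rightarrow> bool" where
  "is_number (Game GL GR) \<longleftrightarrow>
     (\<forall>x\<in>set GL. is_number x) \<and> (\<forall>y\<in>set GR. is_number y) \<and>
     (\<forall>x\<in>set GL. game_lt x (Game GL GR)) \<and> (\<forall>y\<in>set GR. game_lt (Game GL GR) y)"

fun pos_game :: "nat \<Rightarrow> game" where
  "pos_game 0 = Game [] []"
| "pos_game (Suc n) = Game [pos_game n] []"

fun neg_game :: "nat \<Rightarrow> game" where
  "neg_game 0 = Game [] []"
| "neg_game (Suc n) = Game [] [neg_game n]"

definition int_game :: "int \<Rightarrow> game" where
  "int_game z = (if z \<ge> 0 then pos_game (nat z) else neg_game (nat (- z)))"

text \<open>Canonical dyadic rationals: dyad m n is the canonical form of m/2^n.\<close>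

fun dyad :: "int \<Rightarrow> nat \<Rightarrow> game" where
  "dyad m 0 = int_game m"
| "dyad m (Suc n) = (if even m then dyad (m div 2) n
                     else Game [dyad ((m - 1) div 2) n] [dyad ((m + 1) div 2) n])"

definition has_value :: "game \<Rightarrow> real \<Rightarrow> bool" where
  "has_value G x \<longleftrightarrow> (\<exists>m n. x = of_int m / 2 ^ n \<and> game_eq G (dyad m n))"

fun ordsum :: "game \<Rightarrow> game \<Rightarrow> game" where
  "ordsum G (Game HL HR) =
     (case G of Game GL GR \<Rightarrow> Game (GL @ map (ordsum G) HL) (GR @ map (ordsum G) HR))"

end

theory Submission
  imports Defs
begin

(*
  A game equal to a dyadic rational is equal to the canonical form of that rational, and
  canonical forms compare like their values, so values can be computed by comparing with
  canonical forms.  Since G : j = {a, G : (j - 1) | b}, it suffices to show inductively that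
  G : j has value x_j = G + 2^-alpha_1 + ... + 2^-alpha_j.  By the minimality of alpha_(j+1),
  2^-alpha_(j+1) < b - x_j <= 2 * 2^-alpha_(j+1), and x_j is a multiple of 2^-alpha_(j+1);
  then x_j + 2^-alpha_(j+1) is the simplest number strictly between x_j and b, which is the
  value of {a, G : j | b}.  The multiplicity holds for j = 0 because G = {a | b} forces
  b - G <= 2^-e when 2^e is the denominator of G, and it persists because the exponents
  strictly increase.  The case of -k follows by negation, as -(G : H) = (-G) : (-H).
*)

section \<open>Game forms, their order and negation\<close>

fun lopts :: "game \<Rightarrow> game list" where "lopts (Game L R) = L"

fun ropts :: "game \<Rightarrow> game list" where "ropts (Game L R) = R"

lemma game_le_iff:
  "game_le G H \<longleftrightarrow>
     (\<forall>x\<in>set (lopts G). \<not> game_le H x) \<and> (\<forall>y\<in>set (ropts H). \<not> game_le y G)"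
  by (cases G; cases H) simp

lemma size_lopts_less: "x \<in> set (lopts G) \<Longrightarrow> size x < size G"
  by (cases G) (auto dest: size_mem_list_less)

lemma size_ropts_less: "x \<in> set (ropts G) \<Longrightarrow> size x < size G"
  by (cases G) (auto dest: size_mem_list_less)

lemma game_le_refl: "game_le X X"
proof (induction X)
  case (Game L R)
  have "\<not> game_le (Game L R) l" if "l \<in> set L" for l
    using Game.IH(1)[OF that] that by (subst game_le_iff) auto
  moreover have "\<not> game_le r (Game L R)" if "r \<in> set R" for r
    using Game.IH(2)[OF that] that by (subst game_le_iff) auto
  ultimately show ?case by simp
qed

lemma not_game_le_lopt: "x \<in> set (lopts G) \<Longrightarrow> \<not> game_le G x"
  using game_le_refl[of G] by (subst (asm) game_le_iff) auto

lemma not_game_le_ropt: "x \<in> set (ropts G) \<Longrightarrow> \<not> game_le x G"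
  using game_le_refl[of G] by (subst (asm) game_le_iff) auto

lemma game_le_trans: "game_le X Y \<Longrightarrow> game_le Y Z \<Longrightarrow> game_le X Z"
proof (induction "size X + size Y + size Z" arbitrary: X Y Z rule: less_induct)
  case less
  have "\<not> game_le Z w" if w: "w \<in> set (lopts X)" for w
  proof
    assume "game_le Z w"
    then have "game_le Y w"
      using less.hyps[of Y Z w] less.prems(2) size_lopts_less[OF w] by linarith
    with less.prems(1) w show False by (subst (asm) game_le_iff) auto
  qed
  moreover have "\<not> game_le w X" if w: "w \<in> set (ropts Z)" for w
  proof
    assume "game_le w X"
    then have "game_le w Y"
      using less.hyps[of w X Y] less.prems(1) size_ropts_less[OF w] by linarith
    with less.prems(2) w show False by (subst (asm) game_le_iff) auto
  qed
  ultimately show ?case by (subst game_le_iff) blast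
qed

lemma game_eq_refl: "game_eq X X"
  by (simp add: game_eq_def game_le_refl)

lemma game_eq_trans: "game_eq X Y \<Longrightarrow> game_eq Y Z \<Longrightarrow> game_eq X Z"
  by (auto simp: game_eq_def intro: game_le_trans)

lemma game_le_cong: "game_eq X X' \<Longrightarrow> game_eq Y Y' \<Longrightarrow> game_le X Y \<longleftrightarrow> game_le X' Y'"
  by (meson game_eq_def game_le_trans)

fun game_neg :: "game \<Rightarrow> game" where
  "game_neg (Game L R) = Game (map game_neg R) (map game_neg L)"

lemma game_neg_neg [simp]: "game_neg (game_neg X) = X"
  by (induction X) (simp add: map_idI)

lemma game_le_neg_iff [simp]: "game_le (game_neg X) (game_neg Y) \<longleftrightarrow> game_le Y X"
  by (induction Y X rule: game_le.induct) auto

lemma game_eq_neg: "game_eq X Y \<Longrightarrow> game_eq (game_neg X) (game_neg Y)"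
  by (simp add: game_eq_def)

lemma game_neg_pos_game: "game_neg (pos_game n) = neg_game n"
  by (induction n) simp_all

lemma game_neg_int_game: "game_neg (int_game z) = int_game (- z)"
proof -
  have "game_neg (neg_game n) = pos_game n" for n
    by (metis game_neg_neg game_neg_pos_game)
  then show ?thesis
    by (simp add: int_game_def game_neg_pos_game)
qed

lemma game_neg_ordsum: "game_neg (ordsum G H) = ordsum (game_neg G) (game_neg H)"
  by (induction H) (cases G; simp)

section \<open>Canonical forms and values of dyadic rationals\<close>

lemma inverse_pow2_less_iff: "(1::real) / 2 ^ p < 1 / 2 ^ e \<longleftrightarrow> e < p"
  by (simp add: field_simps)

lemma inverse_pow2_le_iff: "(1::real) / 2 ^ p \<le> 1 / 2 ^ e \<longleftrightarrow> e \<le> p"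
  by (simp add: field_simps)

definition dyadic :: "nat \<Rightarrow> real \<Rightarrow> bool" where
  "dyadic e x \<longleftrightarrow> x * 2 ^ e \<in> \<int>"

lemma dyadic_mono:
  assumes "dyadic e x" "e \<le> e'"
  shows "dyadic e' x"
proof -
  have "x * 2 ^ e' = x * 2 ^ e * 2 ^ (e' - e)"
    using assms(2) by (simp flip: power_add)
  then show ?thesis
    using assms(1) unfolding dyadic_def by (metis Ints_mult Ints_numeral Ints_power)
qed

lemma dyadic_neg_iff [simp]: "dyadic e (- x) \<longleftrightarrow> dyadic e x"
  by (simp add: dyadic_def)

lemma dyadic_add_pow: "dyadic e x \<Longrightarrow> dyadic e (x + 1 / 2 ^ e)"
  by (simp add: dyadic_def distrib_right Ints_add)

lemma dyadic_gap:
  assumes "dyadic e x" "dyadic e y" "x < y"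
  shows "x + 1 / 2 ^ e \<le> y"
proof -
  obtain m n where m: "x * 2 ^ e = of_int m" and n: "y * 2 ^ e = of_int n"
    using assms(1,2) unfolding dyadic_def by (auto elim!: Ints_cases)
  have "x * 2 ^ e < y * 2 ^ e"
    using assms(3) by simp
  then have "m + 1 \<le> n"
    unfolding m n by simp
  then have "x * 2 ^ e + 1 \<le> y * 2 ^ e"
    unfolding m n by linarith
  then show ?thesis
    by (simp add: field_simps)
qed

lemma dyadic_add_least_pow:
  assumes "dyadic (Suc d) x" "\<not> dyadic d x"
  shows "dyadic d (x + 1 / 2 ^ Suc d)"
proof -
  obtain m where m: "x * 2 ^ Suc d = of_int m"
    using assms(1) unfolding dyadic_def by (auto elim!: Ints_cases)
  have "odd m"
  proof
    assume "even m"
    then have "x * 2 ^ d = of_int (m div 2)"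
      using m by (auto simp: mult.commute mult.left_commute)
    with assms(2) show False
      unfolding dyadic_def by simp
  qed
  then have "(x + 1 / 2 ^ Suc d) * 2 ^ d = of_int ((m + 1) div 2)"
    using m by (auto elim!: oddE simp: field_simps)
  then show ?thesis
    unfolding dyadic_def by simp
qed

lemma dyadic_eq_frac: "dyadic e x \<Longrightarrow> \<exists>m. x = of_int m / 2 ^ e"
  unfolding dyadic_def by (auto elim!: Ints_cases simp: field_simps)

(* canon X x e: X is the canonical form of x, and e is the least exponent with x * 2^e an
   integer.  For e > 0 this is {x - 2^-e | x + 2^-e}; an integer n only has the option n - 1
   if n > 0, or n + 1 if n < 0. *)
inductive canon :: "game \<Rightarrow> real \<Rightarrow> nat \<Rightarrow> bool" where
  "dyadic e x \<Longrightarrow> (\<forall>d. dyadic d x \<longrightarrow> e \<le> d) \<Longrightarrow>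
   (e = 0 \<and> x \<le> 0 \<longrightarrow> L = []) \<Longrightarrow>
   (\<not> (e = 0 \<and> x \<le> 0) \<longrightarrow> (\<exists>XL f. L = [XL] \<and> canon XL (x - 1 / 2 ^ e) f)) \<Longrightarrow>
   (e = 0 \<and> 0 \<le> x \<longrightarrow> R = []) \<Longrightarrow>
   (\<not> (e = 0 \<and> 0 \<le> x) \<longrightarrow> (\<exists>XR f. R = [XR] \<and> canon XR (x + 1 / 2 ^ e) f)) \<Longrightarrow>
   canon (Game L R) x e"

lemma canon_dyadic: "canon X x e \<Longrightarrow> dyadic e x"
  by (cases rule: canon.cases) auto

lemma canon_least: "canon X x e \<Longrightarrow> dyadic d x \<Longrightarrow> e \<le> d"
  by (cases rule: canon.cases) auto

lemma canon_lopt: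
  "canon X x e \<Longrightarrow> l \<in> set (lopts X) \<Longrightarrow>
    \<not> (e = 0 \<and> x \<le> 0) \<and> (\<exists>f. canon l (x - 1 / 2 ^ e) f)"
  by (cases rule: canon.cases) auto

lemma canon_ropt:
  "canon X x e \<Longrightarrow> r \<in> set (ropts X) \<Longrightarrow>
    \<not> (e = 0 \<and> 0 \<le> x) \<and> (\<exists>f. canon r (x + 1 / 2 ^ e) f)"
  by (cases rule: canon.cases) auto

lemma canon_lopt_exists:
  "canon X x e \<Longrightarrow> \<not> (e = 0 \<and> x \<le> 0) \<Longrightarrow>
    \<exists>l f. l \<in> set (lopts X) \<and> canon l (x - 1 / 2 ^ e) f"
  by (cases rule: canon.cases) auto

lemma canon_ropt_exists:
  "canon X x e \<Longrightarrow> \<not> (e = 0 \<and> 0 \<le> x) \<Longrightarrow>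
    \<exists>r f. r \<in> set (ropts X) \<and> canon r (x + 1 / 2 ^ e) f"
  by (cases rule: canon.cases) auto

lemma canon_less_cases:
  assumes X: "canon X x e" and Y: "canon Y y f" and "y < x"
  obtains (lopt) "\<not> (e = 0 \<and> x \<le> 0)" "y \<le> x - 1 / 2 ^ e"
        | (ropt) "\<not> (f = 0 \<and> 0 \<le> y)" "y + 1 / 2 ^ f \<le> x"
proof (cases "f < e \<or> (f = 0 \<and> 0 \<le> y)")
  case True
  then have "dyadic e y"
    using dyadic_mono[OF canon_dyadic[OF Y]] by auto
  then have "y + 1 / 2 ^ e \<le> x"
    using dyadic_gap canon_dyadic[OF X] \<open>y < x\<close> by blast
  moreover have "\<not> (e = 0 \<and> x \<le> 0)"
    using True \<open>y < x\<close> by auto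
  ultimately show thesis
    using that(1) by simp
next
  case False
  then have "dyadic f x"
    using dyadic_mono[OF canon_dyadic[OF X]] by simp
  then have "y + 1 / 2 ^ f \<le> x"
    using dyadic_gap canon_dyadic[OF Y] \<open>y < x\<close> by blast
  then show thesis
    using that(2) False by simp
qed

lemma canon_le_iff: "canon X x e \<Longrightarrow> canon Y y f \<Longrightarrow> game_le X Y \<longleftrightarrow> x \<le> y"
proof (induction X Y arbitrary: x y e f rule: game_le.induct)
  case (1 XL XR YL YR)
  have left: "game_le (Game YL YR) l \<longleftrightarrow> y \<le> x - 1 / 2 ^ e" if "l \<in> set XL" for l
    using canon_lopt[OF "1.prems"(1)] that "1.IH"(1)[OF that "1.prems"(2)] by auto
  have right: "game_le r (Game XL XR) \<longleftrightarrow> y + 1 / 2 ^ f \<le> x" if "r \<in> set YR" for r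
    using canon_ropt[OF "1.prems"(2)] that "1.IH"(2)[OF that _ "1.prems"(1)] by auto
  show ?case
  proof
    assume le: "game_le (Game XL XR) (Game YL YR)"
    show "x \<le> y"
    proof (rule ccontr)
      assume "\<not> x \<le> y"
      then have "y < x"
        by simp
      with "1.prems" show False
      proof (cases rule: canon_less_cases)
        case lopt
        then obtain l where "l \<in> set XL"
          using canon_lopt_exists[OF "1.prems"(1)] by auto
        then show False
          using le left lopt by simp
      next
        case ropt
        then obtain r where "r \<in> set YR"
          using canon_ropt_exists[OF "1.prems"(2)] by auto
        then show False
          using le right ropt by simp
      qed
    qed
  next
    assume "x \<le> y"
    moreover have "(0::real) < 1 / 2 ^ e" "(0::real) < 1 / 2 ^ f"
      by simp_all
    ultimately have "\<not> y \<le> x - 1 / 2 ^ e" "\<not> y + 1 / 2 ^ f \<le> x"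
      by linarith+
    then show "game_le (Game XL XR) (Game YL YR)"
      using left right by auto
  qed
qed

lemma canon_neg: "canon X x e \<Longrightarrow> canon (game_neg X) (- x) e"
proof (induction rule: canon.induct)
  case (1 e x L R)
  show ?case
    unfolding game_neg.simps
    by (rule canon.intros) (use 1 in \<open>auto simp: minus_add_distrib\<close>)
qed

lemma canon_pos_game: "canon (pos_game n) (of_nat n) 0"
proof (induction n)
  case 0
  show ?case
    by (auto intro: canon.intros simp: dyadic_def)
next
  case (Suc n)
  then show ?case
    by (auto intro!: canon.intros simp: dyadic_def)
qed

lemma canon_int_game: "canon (int_game z) (of_int z) 0"
  using canon_pos_game[of "nat z"] canon_neg[OF canon_pos_game[of "nat (- z)"]]
  by (auto simp: int_game_def game_neg_pos_game)

lemma canon_dyad: "\<exists>e. canon (dyad m n) (of_int m / 2 ^ n) e"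
proof (induction m n rule: dyad.induct)
  case (1 m)
  then show ?case
    using canon_int_game by auto
next
  case (2 m n)
  show ?case
  proof (cases "even m")
    case True
    then have "of_int (m div 2) / 2 ^ n = (of_int m / 2 ^ Suc n :: real)"
      by (auto elim!: evenE)
    then show ?thesis
      using 2(1) True by auto
  next
    case False
    then obtain k where m: "m = 2 * k + 1"
      by (metis oddE)
    define x where "x = (of_int m / 2 ^ Suc n :: real)"
    have "of_int ((m - 1) div 2) / 2 ^ n = x - 1 / 2 ^ Suc n"
      "of_int ((m + 1) div 2) / 2 ^ n = x + 1 / 2 ^ Suc n"
      using m unfolding x_def by (simp_all add: field_simps)
    then obtain f g where
      f: "canon (dyad ((m - 1) div 2) n) (x - 1 / 2 ^ Suc n) f" and
      g: "canon (dyad ((m + 1) div 2) n) (x + 1 / 2 ^ Suc n) g"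
      using 2(2,3) False by metis
    have "\<not> dyadic n x"
    proof
      assume "dyadic n x"
      then obtain j where "x * 2 ^ n = of_int j"
        unfolding dyadic_def by (auto elim!: Ints_cases)
      then have "m = 2 * j"
        unfolding x_def by (simp add: field_simps flip: of_int_mult)
      then show False
        using False by simp
    qed
    then have "\<forall>d. dyadic d x \<longrightarrow> Suc n \<le> d"
      using dyadic_mono by (metis not_less_eq_eq)
    then have "canon (Game [dyad ((m - 1) div 2) n] [dyad ((m + 1) div 2) n]) x (Suc n)"
      using f g by (intro canon.intros) (auto simp: dyadic_def x_def)
    then show ?thesis
      using False unfolding x_def by auto
  qed
qed

lemma canon_eq: "canon X x e \<Longrightarrow> canon Y x f \<Longrightarrow> game_eq X Y"
  by (simp add: canon_le_iff game_eq_def)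

lemma has_value_iff_canon: "has_value X x \<longleftrightarrow> (\<exists>C e. canon C x e \<and> game_eq X C)"
proof
  assume "has_value X x"
  then show "\<exists>C e. canon C x e \<and> game_eq X C"
    unfolding has_value_def using canon_dyad by blast
next
  assume "\<exists>C e. canon C x e \<and> game_eq X C"
  then obtain C e where C: "canon C x e" and XC: "game_eq X C"
    by blast
  obtain m where x: "x = of_int m / 2 ^ e"
    using dyadic_eq_frac[OF canon_dyadic[OF C]] by blast
  obtain f where "canon (dyad m e) x f"
    using canon_dyad x by blast
  then have "game_eq X (dyad m e)"
    using game_eq_trans[OF XC canon_eq[OF C]] by blast
  then show "has_value X x"
    unfolding has_value_def using x by blast
qed

lemma canon_exists:
  assumes "dyadic p x"
  shows "\<exists>C e. canon C x e \<and> e \<le> p"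
proof -
  obtain m where "x = of_int m / 2 ^ p"
    using dyadic_eq_frac[OF assms] by blast
  then obtain e where "canon (dyad m p) x e"
    using canon_dyad by blast
  then show ?thesis
    using canon_least[OF _ assms] by blast
qed

lemma canon_has_value: "canon C x e \<Longrightarrow> has_value C x"
  unfolding has_value_iff_canon game_eq_def using game_le_refl by blast

lemma has_value_le_iff:
  assumes "has_value X x" "has_value Y y"
  shows "game_le X Y \<longleftrightarrow> x \<le> y"
proof -
  obtain C e D f where "canon C x e" "game_eq X C" "canon D y f" "game_eq Y D"
    using assms unfolding has_value_iff_canon by blast
  then show ?thesis
    using canon_le_iff game_le_cong by blast
qed

lemma has_value_unique: "has_value X x \<Longrightarrow> has_value X y \<Longrightarrow> x = y"
  using has_value_le_iff game_le_refl by (meson order_antisym)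

lemma has_value_neg: "has_value X x \<Longrightarrow> has_value (game_neg X) (- x)"
  unfolding has_value_iff_canon using canon_neg game_eq_neg by blast

lemma has_value_lopt_less:
  "has_value X x \<Longrightarrow> l \<in> set (lopts X) \<Longrightarrow> has_value l v \<Longrightarrow> v < x"
  using has_value_le_iff not_game_le_lopt by force

section \<open>Simplest numbers between options\<close>

lemma game_le_canonI:
  assumes C: "canon C c e"
    and lopts_less: "\<forall>l\<in>set L. \<exists>v. has_value l v \<and> v < c"
    and ropt_close: "\<exists>r\<in>set R. \<exists>v. has_value r v \<and> v \<le> c + 1 / 2 ^ e"
  shows "game_le (Game L R) C"
proof (subst game_le_iff, intro conjI ballI)
  fix l assume "l \<in> set (lopts (Game L R))"
  then show "\<not> game_le C l"
    using lopts_less canon_has_value[OF C] has_value_le_iff by fastforce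
next
  fix r assume "r \<in> set (ropts C)"
  then obtain f where "canon r (c + 1 / 2 ^ e) f"
    using canon_ropt[OF C] by blast
  moreover obtain r' v where r': "r' \<in> set R" "has_value r' v" "v \<le> c + 1 / 2 ^ e"
    using ropt_close by blast
  ultimately have "game_le r' r"
    using has_value_le_iff canon_has_value by blast
  with r'(1) show "\<not> game_le r (Game L R)"
    using game_le_trans not_game_le_ropt[of r' "Game L R"] by auto
qed

lemma canon_le_gameI:
  assumes C: "canon C c e"
    and ropts_greater: "\<forall>r\<in>set R. \<exists>v. has_value r v \<and> c < v"
    and lopt_close: "\<exists>l\<in>set L. \<exists>v. has_value l v \<and> c - 1 / 2 ^ e \<le> v"
  shows "game_le C (Game L R)"
proof (subst game_le_iff, intro conjI ballI)
  fix l assume "l \<in> set (lopts C)"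
  then obtain f where "canon l (c - 1 / 2 ^ e) f"
    using canon_lopt[OF C] by blast
  moreover obtain l' v where l': "l' \<in> set L" "has_value l' v" "c - 1 / 2 ^ e \<le> v"
    using lopt_close by blast
  ultimately have "game_le l l'"
    using has_value_le_iff canon_has_value by blast
  with l'(1) show "\<not> game_le (Game L R) l"
    using game_le_trans not_game_le_lopt[of l' "Game L R"] by auto
next
  fix r assume "r \<in> set (ropts (Game L R))"
  then show "\<not> game_le r C"
    using ropts_greater canon_has_value[OF C] has_value_le_iff by fastforce
qed

(* A form of the simplicity theorem: the canonical options c -/+ 2^-e of c are dominated by
   options of Game L R. *)
lemma has_value_GameI:
  assumes C: "canon C c e"
    and "\<forall>l\<in>set L. \<exists>v. has_value l v \<and> v < c"
    and "\<forall>r\<in>set R. \<exists>v. has_value r v \<and> c < v"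
    and "\<exists>l\<in>set L. \<exists>v. has_value l v \<and> c - 1 / 2 ^ e \<le> v"
    and "\<exists>r\<in>set R. \<exists>v. has_value r v \<and> v \<le> c + 1 / 2 ^ e"
  shows "has_value (Game L R) c"
proof -
  have "game_eq (Game L R) C"
    unfolding game_eq_def using game_le_canonI canon_le_gameI assms by blast
  then show ?thesis
    using C unfolding has_value_iff_canon by blast
qed

lemma canon_ropt_lopt_less:
  assumes C: "canon C c e" and r: "r \<in> set (ropts C)" and l: "l \<in> set (lopts r)"
    and v: "has_value l v"
  shows "v < c"
proof -
  obtain f where r_canon: "canon r (c + 1 / 2 ^ e) f" and e: "\<not> (e = 0 \<and> 0 \<le> c)"
    using canon_ropt[OF C r] by blast
  obtain g where "canon l (c + 1 / 2 ^ e - 1 / 2 ^ f) g" and f: "\<not> (f = 0 \<and> c + 1 / 2 ^ e \<le> 0)"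
    using canon_lopt[OF r_canon l] by blast
  then have v_eq: "v = c + 1 / 2 ^ e - 1 / 2 ^ f"
    using has_value_unique[OF v] canon_has_value by blast
  show ?thesis
  proof (cases e)
    case 0
    then have "dyadic 0 c" "c < 0"
      using canon_dyadic[OF C] e by auto
    then have "c + 1 \<le> 0"
      using dyadic_gap[of 0 c 0] by (simp add: dyadic_def)
    moreover have "f = 0"
      using canon_least[OF r_canon dyadic_add_pow[OF canon_dyadic[OF C]]] 0 by simp
    ultimately show ?thesis
      using f 0 by simp
  next
    case (Suc d)
    then have "\<not> dyadic d c"
      using canon_least[OF C] by fastforce
    then have "dyadic d (c + 1 / 2 ^ e)"
      using dyadic_add_least_pow canon_dyadic[OF C] Suc by blast
    then have "f < e"
      using canon_least[OF r_canon] Suc by fastforce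
    then show ?thesis
      using v_eq inverse_pow2_less_iff[of e f] by simp
  qed
qed

lemma dyadic_of_ropts_gap:
  assumes G: "has_value (Game L R) g"
    and gap: "\<forall>r\<in>set R. \<exists>v. has_value r v \<and> 1 / 2 ^ p < v - g"
  shows "dyadic p g"
proof -
  obtain C e where C: "canon C g e" and GC: "game_eq (Game L R) C"
    using G unfolding has_value_iff_canon by blast
  have "e \<le> p"
  proof (cases "e = 0 \<and> 0 \<le> g")
    case False
    then obtain r f where r: "r \<in> set (ropts C)" and r_canon: "canon r (g + 1 / 2 ^ e) f"
      using canon_ropt_exists[OF C] by blast
    have "\<not> game_le r (Game L R)"
      using not_game_le_ropt[OF r] game_le_cong[OF game_eq_refl GC] by simp
    then consider l where "l \<in> set (lopts r)" "game_le (Game L R) l"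
      | r' where "r' \<in> set R" "game_le r' r"
      by (subst (asm) game_le_iff) auto
    then show ?thesis
    proof cases
      case (1 l)
      obtain f' where "canon l (g + 1 / 2 ^ e - 1 / 2 ^ f) f'"
        using canon_lopt[OF r_canon \<open>l \<in> set (lopts r)\<close>] by blast
      then have "has_value l (g + 1 / 2 ^ e - 1 / 2 ^ f)"
        by (rule canon_has_value)
      with 1 show ?thesis
        using canon_ropt_lopt_less[OF C r] has_value_le_iff[OF G] by fastforce
    next
      case (2 r')
      then obtain v where "has_value r' v" "1 / 2 ^ p < v - g"
        using gap by blast
      moreover have "v \<le> g + 1 / 2 ^ e"
        using 2 calculation(1) has_value_le_iff canon_has_value[OF r_canon] by blast
      ultimately show ?thesis
        using inverse_pow2_less_iff[of p e] by simp
    qed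
  qed simp
  then show ?thesis
    using dyadic_mono canon_dyadic[OF C] by blast
qed

section \<open>Ordinal sums with integers\<close>

lemma has_value_ordinal_step:
  assumes a: "has_value a av" and H: "has_value H x" and b: "has_value b bv"
    and "av < x" and "dyadic p x" and "1 / 2 ^ p < bv - x" and "bv - x \<le> 2 / 2 ^ p"
  shows "has_value (Game [a, H] [b]) (x + 1 / 2 ^ p)"
proof -
  obtain C e where C: "canon C (x + 1 / 2 ^ p) e" and "e \<le> p"
    using canon_exists dyadic_add_pow \<open>dyadic p x\<close> by blast
  then have "(1::real) / 2 ^ p \<le> 1 / 2 ^ e"
    by (simp add: inverse_pow2_le_iff)
  moreover have "(0::real) < 1 / 2 ^ p"
    by simp
  ultimately show ?thesis
    using a H b assms(4-) by (intro has_value_GameI[OF C]) auto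
qed

lemma has_value_ordsum_pos_game:
  fixes p :: "nat \<Rightarrow> nat"
  assumes G: "G = Game [a] [b]"
    and g: "has_value G g" and a: "has_value a av" and b: "has_value b bv"
    and steps: "\<And>i. i \<in> {1..k} \<Longrightarrow>
      1 / 2 ^ p i < bv - (g + (\<Sum>j=1..<i. 1 / 2 ^ p j)) \<and>
      bv - (g + (\<Sum>j=1..<i. 1 / 2 ^ p j)) \<le> 2 / 2 ^ p i"
  shows "has_value (ordsum G (pos_game k)) (g + (\<Sum>i=1..k. 1 / 2 ^ p i))"
proof -
  define x where "x j = g + (\<Sum>i=1..j. 1 / 2 ^ p i)" for j
  have x_Suc: "x (Suc j) = x j + 1 / 2 ^ p (Suc j)" for j
    by (simp add: x_def)
  have step: "1 / 2 ^ p (Suc j) < bv - x j \<and> bv - x j \<le> 2 / 2 ^ p (Suc j)" if "j < k" for j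
    using steps[of "Suc j"] that by (simp add: x_def atLeastLessThanSuc_atLeastAtMost)
  have p_less: "p (Suc j) < p (Suc (Suc j))" if "Suc j < k" for j
  proof -
    have "1 / 2 ^ p (Suc (Suc j)) < bv - x (Suc j)"
      using step[OF that] by simp
    also have "\<dots> \<le> 1 / 2 ^ p (Suc j)"
      using step[of j] that x_Suc by simp
    finally show ?thesis
      by (simp add: inverse_pow2_less_iff)
  qed
  have av_less: "av < x j" for j
  proof -
    have "av < g"
      using has_value_lopt_less[OF g _ a] G by simp
    moreover have "0 \<le> (\<Sum>i=1..j. 1 / 2 ^ p i :: real)"
      by (intro sum_nonneg) simp
    ultimately show ?thesis
      unfolding x_def by linarith
  qed
  have "has_value (ordsum G (pos_game j)) (x j) \<and> (j < k \<longrightarrow> dyadic (p (Suc j)) (x j))"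
    if "j \<le> k" for j
    using that
  proof (induction j)
    case 0
    have "has_value (ordsum G (pos_game 0)) (x 0)"
      using g G by (simp add: x_def)
    moreover have "dyadic (p 1) (x 0)" if "0 < k"
      using dyadic_of_ropts_gap[of "[a]" "[b]" g "p 1"] g G b step[OF that] by (auto simp: x_def)
    ultimately show ?case
      by simp
  next
    case (Suc j)
    then have IH: "has_value (ordsum G (pos_game j)) (x j)" "dyadic (p (Suc j)) (x j)"
      by auto
    have "has_value (ordsum G (pos_game (Suc j))) (x (Suc j))"
      using has_value_ordinal_step[OF a IH(1) b av_less IH(2)] step[of j] Suc.prems x_Suc G by simp
    moreover have "dyadic (p (Suc (Suc j))) (x (Suc j))" if "Suc j < k"
      using dyadic_mono[OF dyadic_add_pow[OF IH(2)]] p_less[OF that] by (simp add: x_Suc)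
    ultimately show ?case
      by blast
  qed
  from this[of k] show ?thesis
    by (simp add: x_def)
qed

definition greedy_exponents :: "real \<Rightarrow> nat \<Rightarrow> (nat \<Rightarrow> int) \<Rightarrow> bool" where
  "greedy_exponents d k \<alpha> \<longleftrightarrow>
     (\<forall>i\<in>{1..k}.
        2 powr (- real_of_int (\<alpha> i)) < d - (\<Sum>j=1..<i. 2 powr (- real_of_int (\<alpha> j))) \<and>
        (\<forall>n::int. 2 powr (- real_of_int n) < d - (\<Sum>j=1..<i. 2 powr (- real_of_int (\<alpha> j)))
           \<longrightarrow> \<alpha> i \<le> n))"

lemma greedy_exponents_pos:
  assumes "greedy_exponents d k \<alpha>" "d \<le> 1" "i \<in> {1..k}"
  shows "0 < \<alpha> i"
proof (rule ccontr)
  assume "\<not> 0 < \<alpha> i"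
  then have "1 \<le> 2 powr (- real_of_int (\<alpha> i))"
    by (intro ge_one_powr_ge_zero) auto
  moreover have "0 \<le> (\<Sum>j=1..<i. 2 powr (- real_of_int (\<alpha> j)))"
    by (simp add: sum_nonneg)
  moreover have "2 powr (- real_of_int (\<alpha> i)) < d - (\<Sum>j=1..<i. 2 powr (- real_of_int (\<alpha> j)))"
    using assms(1,3) unfolding greedy_exponents_def by blast
  ultimately show False
    using assms(2) by linarith
qed

lemma greedy_exponents_le_double:
  assumes "greedy_exponents d k \<alpha>" "i \<in> {1..k}"
  shows "d - (\<Sum>j=1..<i. 2 powr (- real_of_int (\<alpha> j))) \<le> 2 * 2 powr (- real_of_int (\<alpha> i))"
proof -
  have "\<forall>n::int. 2 powr (- real_of_int n) < d - (\<Sum>j=1..<i. 2 powr (- real_of_int (\<alpha> j)))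
           \<longrightarrow> \<alpha> i \<le> n"
    using assms unfolding greedy_exponents_def by blast
  then have "\<not> 2 powr (- real_of_int (\<alpha> i - 1)) < d - (\<Sum>j=1..<i. 2 powr (- real_of_int (\<alpha> j)))"
    by fastforce
  moreover have "2 powr (- real_of_int (\<alpha> i - 1)) = 2 * 2 powr (- real_of_int (\<alpha> i))"
    using powr_add[of 2 1 "- real_of_int (\<alpha> i)"] by simp
  ultimately show ?thesis
    by linarith
qed

lemma powr_minus_of_int: "0 \<le> z \<Longrightarrow> (2::real) powr (- real_of_int z) = 1 / 2 ^ nat z"
  by (simp add: powr_minus_divide powr_realpow flip: of_nat_nat)

lemma has_value_ordsum_greedy:
  assumes "G = Game [a] [b]" "has_value G g" "has_value a av" "has_value b bv"
    and "bv - g \<le> 1" "greedy_exponents (bv - g) k \<alpha>"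
  shows "has_value (ordsum G (int_game (int k))) (g + (\<Sum>i=1..k. 2 powr (- real_of_int (\<alpha> i))))"
proof -
  define p where "p i = nat (\<alpha> i)" for i
  have pow: "2 powr (- real_of_int (\<alpha> i)) = 1 / 2 ^ p i" if "i \<in> {1..k}" for i
    using powr_minus_of_int greedy_exponents_pos[OF assms(6,5) that] unfolding p_def by simp
  have sums: "(\<Sum>j=1..<i. 2 powr (- real_of_int (\<alpha> j))) = (\<Sum>j=1..<i. 1 / 2 ^ p j)"
    if "i \<in> {1..k}" for i
    using pow that by (intro sum.cong) auto
  have "1 / 2 ^ p i < bv - (g + (\<Sum>j=1..<i. 1 / 2 ^ p j)) \<and>
      bv - (g + (\<Sum>j=1..<i. 1 / 2 ^ p j)) \<le> 2 / 2 ^ p i" if "i \<in> {1..k}" for i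
  proof -
    have "2 powr (- real_of_int (\<alpha> i)) < bv - g - (\<Sum>j=1..<i. 2 powr (- real_of_int (\<alpha> j)))"
      using assms(6) that unfolding greedy_exponents_def by blast
    with greedy_exponents_le_double[OF assms(6) that] show ?thesis
      unfolding pow[OF that] sums[OF that] by simp
  qed
  then have "has_value (ordsum G (pos_game k)) (g + (\<Sum>i=1..k. 1 / 2 ^ p i))"
    by (rule has_value_ordsum_pos_game[OF assms(1-4)])
  moreover have "(\<Sum>i=1..k. 2 powr (- real_of_int (\<alpha> i))) = (\<Sum>i=1..k. 1 / 2 ^ p i)"
    using pow by (intro sum.cong) auto
  ultimately show ?thesis
    by (simp add: int_game_def)
qed

theorem theorem4p2:
  fixes a b G :: game and k :: nat and av bv gv :: real and \<alpha> \<beta> :: "nat \<Rightarrow> int"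
  assumes "k > 0"
    and "is_number a" and "is_number b" and "is_number G"
    and "G = Game [a] [b]"
    and "has_value G gv" and "has_value a av" and "has_value b bv"
  shows "(bv - gv \<le> 1 \<and>
          (\<forall>i\<in>{1..k}.
             0 < \<alpha> i \<and>
             2 powr (- real_of_int (\<alpha> i)) < bv - gv - (\<Sum>j=1..<i. 2 powr (- real_of_int (\<alpha> j))) \<and>
             (\<forall>n::int. 2 powr (- real_of_int n) < bv - gv - (\<Sum>j=1..<i. 2 powr (- real_of_int (\<alpha> j)))
                 \<longrightarrow> \<alpha> i \<le> n))
         \<longrightarrow> has_value (ordsum G (int_game (int k))) (gv + (\<Sum>i=1..k. 2 powr (- real_of_int (\<alpha> i)))))
       \<and>
         (gv - av \<le> 1 \<and>
          (\<forall>i\<in>{1..k}.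
             2 powr (- real_of_int (\<beta> i)) < gv - av - (\<Sum>j=1..<i. 2 powr (- real_of_int (\<beta> j))) \<and>
             (\<forall>n::int. 2 powr (- real_of_int n) < gv - av - (\<Sum>j=1..<i. 2 powr (- real_of_int (\<beta> j)))
                 \<longrightarrow> \<beta> i \<le> n))
         \<longrightarrow> has_value (ordsum G (int_game (- int k))) (gv - (\<Sum>i=1..k. 2 powr (- real_of_int (\<beta> i)))))"
proof -
  have "has_value (ordsum G (int_game (int k))) (gv + (\<Sum>i=1..k. 2 powr (- real_of_int (\<alpha> i))))"
    if "bv - gv \<le> 1" "greedy_exponents (bv - gv) k \<alpha>"
    using has_value_ordsum_greedy assms(5-8) that by blast
  moreover have "has_value (ordsum G (int_game (- int k))) (gv - (\<Sum>i=1..k. 2 powr (- real_of_int (\<beta> i))))"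
    if "gv - av \<le> 1" "greedy_exponents (gv - av) k \<beta>"
  proof -
    have "game_neg G = Game [game_neg b] [game_neg a]"
      using assms(5) by simp
    moreover have "- av - - gv \<le> 1" "greedy_exponents (- av - - gv) k \<beta>"
      using that by simp_all
    ultimately have "has_value (ordsum (game_neg G) (int_game (int k)))
        (- gv + (\<Sum>i=1..k. 2 powr (- real_of_int (\<beta> i))))"
      using has_value_ordsum_greedy has_value_neg assms(6-8) by blast
    then have "has_value (game_neg (ordsum (game_neg G) (int_game (int k))))
        (gv - (\<Sum>i=1..k. 2 powr (- real_of_int (\<beta> i))))"
      using has_value_neg by fastforce
    then show ?thesis
      by (simp add: game_neg_ordsum game_neg_int_game)
  qed
  ultimately show ?thesis
    unfolding greedy_exponents_def by blast
qed

end
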